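(* Let $\lambda$ be Lebesgue measure on $[0,1]$ and let $T:[0,1]\to[0,1]$ be an invertible, ergodic, $\lambda$-preserving transformation which is rigid rank 1, with associated numbers $n_k$ and sets $A_k$ (as in the context). Let $\sigma$ be a self-joining of $([0,1],T,\lambda)$ with disintegration $(\sigma_x)_{x\in[0,1]}$ over the first coordinate. Fix $\epsilon>0$. Say that an index $0\le j<n_k$ is $k$-good if there exists $y_j\in T^jA_k$ such that $$\lambda\big(\{x\in T^jA_k: d_{\mathcal{M}([0,1])}(\sigma_x,\sigma_{y_j})<\epsilon\}\big)\ge(1-\epsilon)\lambda(A_k).$$ Then there exists $k_0$ such that for all $k>k_0$, $$\big|\{0\le j<n_k: j\text{ is }k\text{-good}\}\big|>(1-\epsilon)n_k.$$
   Context: $T$ is called rigid rank 1 if there exist positive integers $n_j$ and measurable sets $A_j\subset[0,1]$ such that: (1) $\lim_{j\to\infty}\lambda\big(\bigcup_{i=0}^{n_j-1}T^iA_j\big)=1$; (2) the sets $A_j,TA_j,\dots,T^{n_j-1}A_j$ are pairwise disjoint; (3) $\lim_{j\to\infty}\lambda(T^{n_j}A_j\cap A_j)/\lambda(A_j)=1$; (4) for every $\varepsilon>0$ there exist, for each $j$, metric balls $B^{(j)}_0,\dots,B^{(j)}_{n_j-1}\subset[0,1]$ of diameter at most $\varepsilon$ such that $\lim_{j\to\infty}\sum_{i=0}^{n_j-1}\lambda(T^iA_j\setminus B^{(j)}_i)=0$. A self-joining of $([0,1],T,\lambda)$ is a $T\times T$-invariant Borel probability measure on $[0,1]\times[0,1]$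 both of whose marginals equal $\lambda$; $\sigma_x$ is regarded as a probability measure on $[0,1]$. $d_{\mathcal{M}([0,1])}$ is the Kantorovich–Rubinstein metric on finite measures on $[0,1]$: $d_{\mathcal{M}([0,1])}(\mu,\nu)=\sup\{|\int f\,d\mu-\int f\,d\nu|: f:[0,1]\to\mathbb{R}\text{ 1-Lipschitz}\}$. *)

theory Defs
  imports "HOL-Probability.Probability"
begin

definition lam :: "real measure" where
  "lam = restrict_space lborel {0..1}"

definition itimg :: "(real \<Rightarrow> real) \<Rightarrow> nat \<Rightarrow> real set \<Rightarrow> real set" where
  "itimg T i A = (T ^^ i) ` A"

definition invertible_mpt :: "(real \<Rightarrow> real) \<Rightarrow> bool" where
  "invertible_mpt T \<longleftrightarrow>
     T \<in> measurable lam lam \<and> bij_betw T {0..1} {0..1} \<and>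
     the_inv_into {0..1} T \<in> measurable lam lam \<and>
     distr lam lam T = lam"

definition ergodic :: "(real \<Rightarrow> real) \<Rightarrow> bool" where
  "ergodic T \<longleftrightarrow> (\<forall>A \<in> sets lam. T -` A \<inter> {0..1} = A \<longrightarrow> measure lam A = 0 \<or> measure lam A = 1)"

definition rigid_rank1_data :: "(real \<Rightarrow> real) \<Rightarrow> (nat \<Rightarrow> nat) \<Rightarrow> (nat \<Rightarrow> real set) \<Rightarrow> bool" where
  "rigid_rank1_data T n A \<longleftrightarrow>
     (\<forall>j. 0 < n j \<and> A j \<in> sets lam) \<and>
     ((\<lambda>j. measure lam (\<Union>i<n j. itimg T i (A j))) \<longlonglongrightarrow> 1) \<and>
     (\<forall>j. disjoint_family_on (\<lambda>i. itimg T i (A j)) {..<n j}) \<and>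
     ((\<lambda>j. measure lam (itimg T (n j) (A j) \<inter> A j) / measure lam (A j)) \<longlonglongrightarrow> 1) \<and>
     (\<forall>\<epsilon>>0. \<exists>c :: nat \<Rightarrow> nat \<Rightarrow> real.
        (\<lambda>j. \<Sum>i<n j. measure lam (itimg T i (A j) - cball (c j i) (\<epsilon>/2))) \<longlonglongrightarrow> 0)"

definition rigid_rank1 :: "(real \<Rightarrow> real) \<Rightarrow> bool" where
  "rigid_rank1 T \<longleftrightarrow> (\<exists>n A. rigid_rank1_data T n A)"

definition self_joining :: "(real \<Rightarrow> real) \<Rightarrow> (real \<times> real) measure \<Rightarrow> bool" where
  "self_joining T \<sigma> \<longleftrightarrow>
     sets \<sigma> = sets (lam \<Otimes>\<^sub>M lam) \<and> prob_space \<sigma> \<and>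
     distr \<sigma> (lam \<Otimes>\<^sub>M lam) (\<lambda>(x,y). (T x, T y)) = \<sigma> \<and>
     distr \<sigma> lam fst = lam \<and> distr \<sigma> lam snd = lam"

definition disintegration :: "(real \<times> real) measure \<Rightarrow> (real \<Rightarrow> real measure) \<Rightarrow> bool" where
  "disintegration \<sigma> \<sigma>x \<longleftrightarrow>
     \<sigma>x \<in> measurable lam (prob_algebra lam) \<and>
     (\<forall>A \<in> sets lam. \<forall>B \<in> sets lam.
        emeasure \<sigma> (A \<times> B) = (\<integral>\<^sup>+ x \<in> A. emeasure (\<sigma>x x) B \<partial>lam))"

definition KR_dist :: "real measure \<Rightarrow> real measure \<Rightarrow> real" where
  "KR_dist \<mu> \<nu> = (SUP f \<in> {f :: real \<Rightarrow> real. 1-lipschitz_on {0..1} f}.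
                     \<bar>(\<integral>x. f x \<partial>\<mu>) - (\<integral>x. f x \<partial>\<nu>)\<bar>)"

definition k_good :: "(real \<Rightarrow> real) \<Rightarrow> (nat \<Rightarrow> real set) \<Rightarrow> (real \<Rightarrow> real measure) \<Rightarrow> real \<Rightarrow> nat \<Rightarrow> nat \<Rightarrow> bool" where
  "k_good T A \<sigma>x \<epsilon> k j \<longleftrightarrow>
     (\<exists>y \<in> itimg T j (A k).
        measure lam {x \<in> itimg T j (A k). KR_dist (\<sigma>x x) (\<sigma>x y) < \<epsilon>} \<ge> (1 - \<epsilon>) * measure lam (A k))"

end

theory Submission
  imports Defs
begin

(*
  Up to 4/(m+1), the Kantorovich-Rubinstein distance of probability measures on [0,1] is the
  maximum of |\<integral>g d\<mu> - \<integral>g d\<nu>| over finitely many 1-Lipschitz grid functions g.  So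
  x \<mapsto> \<sigma>x x is controlled by finitely many bounded measurable functions x \<mapsto> \<integral>g d(\<sigma>x x),
  and a Lusin-type argument gives a compact K with \<lambda>([0,1] - K) < \<epsilon>^2 and r > 0 such that
  KR(\<sigma>x x, \<sigma>x y) < \<epsilon> whenever x, y \<in> K and |x - y| < r.  By condition (4) of rigid rank
  one, for large k the i-th level T^i A_k lies, up to a small total error, in a ball of radius
  r/4, and by condition (1) the levels fill almost all of [0,1].  A level is k-good once the part
  of it outside K \<inter> ball has measure at most \<epsilon> \<lambda>(A_k); since the total of these parts is
  below \<epsilon>^2 n_k \<lambda>(A_k), fewer than \<epsilon> n_k levels are bad.
*)

lemma space_lam [simp]: "space lam = {0..1}"
  by (simp add: lam_def)

lemma sets_lam_iff: "S \<in> sets lam \<longleftrightarrow> S \<subseteq> {0..1} \<and> S \<in> sets borel"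
  unfolding lam_def by (auto simp: sets_restrict_space_iff)

lemma closed_Diff_sets_lam: "S \<in> sets lam \<Longrightarrow> closed C \<Longrightarrow> S - C \<in> sets lam"
  by (auto simp: sets_lam_iff)

lemma prob_space_lam: "prob_space lam"
proof
  have "emeasure lam (space lam) = emeasure lborel {0..(1::real)}"
    unfolding lam_def by (subst emeasure_restrict_space) auto
  then show "emeasure lam (space lam) = 1" by simp
qed

interpretation lam: prob_space lam
  by (rule prob_space_lam)

lemma measure_lam_less_of_lebesgue:
  assumes "S \<in> sets lam" "emeasure lebesgue S < ennreal d"
  shows "measure lam S < d"
proof -
  have "emeasure lam S = emeasure lebesgue S"
    using assms(1) unfolding lam_def by (subst emeasure_restrict_space) (auto simp: sets_lam_iff[unfolded lam_def])
  then have "ennreal (measure lam S) < ennreal d"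
    using assms by (simp add: lam.emeasure_eq_measure)
  then show ?thesis
    by (metis ennreal_less_iff ennreal_less_zero_iff linorder_not_less measure_nonneg order_less_le_trans)
qed

lemma invertible_mpt_image:
  assumes T: "invertible_mpt T" and B: "B \<in> sets lam"
  shows "T ` B \<in> sets lam" "measure lam (T ` B) = measure lam B"
proof -
  let ?S = "the_inv_into {0..1} T"
  have bij: "bij_betw T {0..1} {0..1}" and S: "?S \<in> lam \<rightarrow>\<^sub>M lam"
    and T_meas: "T \<in> lam \<rightarrow>\<^sub>M lam" and T_pres: "distr lam lam T = lam"
    using T unfolding invertible_mpt_def by auto
  have B01: "B \<subseteq> {0..1}" using B sets_lam_iff by blast
  have inj: "inj_on T {0..1}" using bij bij_betw_def by blast
  have "T ` B = ?S -` B \<inter> {0..1}"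
  proof (intro subset_antisym subsetI)
    fix z assume "z \<in> T ` B"
    then obtain x where x: "x \<in> B" "z = T x" by auto
    then have "?S (T x) \<in> B" using B01 the_inv_into_f_f[OF inj] by auto
    moreover have "T x \<in> {0..1}" using x B01 bij bij_betw_imp_surj_on by blast
    ultimately show "z \<in> ?S -` B \<inter> {0..1}" using x by auto
  next
    fix y assume y: "y \<in> ?S -` B \<inter> {0..1::real}"
    then have "T (?S y) = y" using f_the_inv_into_f_bij_betw[OF bij] by auto
    then show "y \<in> T ` B" using y by force
  qed
  then show TB: "T ` B \<in> sets lam"
    using measurable_sets[OF S B] by simp
  have "T -` (T ` B) \<inter> {0..1} = B"
    using B01 inj by (auto simp: inj_on_def)
  then have "measure lam B = measure (distr lam lam T) (T ` B)"
    using TB T_meas by (subst measure_distr) auto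
  then show "measure lam (T ` B) = measure lam B" using T_pres by simp
qed

lemma
  assumes "invertible_mpt T" and "B \<in> sets lam"
  shows itimg_sets_lam: "itimg T i B \<in> sets lam"
    and measure_itimg: "measure lam (itimg T i B) = measure lam B"
proof -
  have "itimg T i B \<in> sets lam \<and> measure lam (itimg T i B) = measure lam B"
  proof (induction i)
    case (Suc i)
    have "itimg T (Suc i) B = T ` itimg T i B"
      unfolding itimg_def by (simp add: image_image)
    then show ?case using Suc invertible_mpt_image[OF assms(1)] by auto
  qed (use assms(2) in \<open>simp add: itimg_def\<close>)
  then show "itimg T i B \<in> sets lam" "measure lam (itimg T i B) = measure lam B" by auto
qed

(* McShane extension of the values q_i/(m+1) at the nodes i/(m+1).  Up to additive constants these
  functions form a finite 2/(m+1)-net of the 1-Lipschitz functions on [0,1]. *)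
definition grid_lip :: "nat \<Rightarrow> int list \<Rightarrow> real \<Rightarrow> real" where
  "grid_lip m qs x =
     Min ((\<lambda>i. of_int (qs ! i) / real (Suc m) + \<bar>x - real i / real (Suc m)\<bar>) ` {..Suc m})"

definition grid_coeffs :: "nat \<Rightarrow> int list set" where
  "grid_coeffs m = {qs. length qs = Suc (Suc m) \<and> set qs \<subseteq> {-int (Suc m)..int (Suc m)}}"

lemma finite_grid_coeffs: "finite (grid_coeffs m)"
proof -
  have "grid_coeffs m \<subseteq> {qs. set qs \<subseteq> {-int (Suc m)..int (Suc m)} \<and> length qs = Suc (Suc m)}"
    unfolding grid_coeffs_def by auto
  then show ?thesis
    using finite_lists_length_eq[of "{-int (Suc m)..int (Suc m)}"] finite_subset by blast
qed

lemma grid_coeffs_nonempty: "grid_coeffs m \<noteq> {}"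
proof -
  have "replicate (Suc (Suc m)) 0 \<in> grid_coeffs m" unfolding grid_coeffs_def by auto
  then show ?thesis by blast
qed

lemma grid_lip_le_add_dist: "grid_lip m qs x \<le> grid_lip m qs y + \<bar>x - y\<bar>"
proof -
  let ?t = "\<lambda>z i. of_int (qs ! i) / real (Suc m) + \<bar>z - real i / real (Suc m)\<bar>"
  have "grid_lip m qs y \<in> ?t y ` {..Suc m}"
    unfolding grid_lip_def by (rule Min_in) auto
  then obtain i where i: "i \<le> Suc m" "grid_lip m qs y = ?t y i" by auto
  have "grid_lip m qs x \<le> ?t x i"
    unfolding grid_lip_def using i(1) by (intro Min_le) auto
  also have "\<dots> \<le> ?t y i + \<bar>x - y\<bar>" by simp
  finally show ?thesis using i by simp
qed

lemma grid_lip_lipschitz: "1-lipschitz_on S (grid_lip m qs)"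
proof (rule lipschitz_onI)
  fix x y :: real
  show "dist (grid_lip m qs x) (grid_lip m qs y) \<le> 1 * dist x y"
    using grid_lip_le_add_dist[of m qs x y] grid_lip_le_add_dist[of m qs y x]
    by (simp add: dist_real_def abs_minus_commute)
qed simp

lemma abs_diff_grid_lip_le:
  fixes u :: "real \<Rightarrow> real" and m :: nat
  defines "M \<equiv> real (Suc m)"
  assumes u: "1-lipschitz_on {0..1} u" and x: "x \<in> {0..1}"
    and qs: "\<And>i. i \<le> Suc m \<Longrightarrow> u (real i / M) - 1 / M \<le> of_int (qs ! i) / M \<and> of_int (qs ! i) / M \<le> u (real i / M)"
  shows "\<bar>u x - grid_lip m qs x\<bar> \<le> 2 / M"
proof -
  have M: "M \<ge> 1" unfolding M_def by simp
  have grid: "real i / M \<in> {0..1}" if "i \<le> Suc m" for i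
    using that unfolding M_def by auto
  have u_close: "\<bar>u x - u (real i / M)\<bar> \<le> \<bar>x - real i / M\<bar>" if "i \<le> Suc m" for i
    using lipschitz_onD[OF u x grid[OF that]] by (simp add: dist_real_def)
  have "u x - 1 / M \<le> of_int (qs ! i) / M + \<bar>x - real i / M\<bar>" if "i \<le> Suc m" for i
    using qs[OF that] u_close[OF that] by linarith
  then have lower: "u x - 1 / M \<le> grid_lip m qs x"
    unfolding grid_lip_def M_def[symmetric] by (subst Min_ge_iff) auto
  define j where "j = nat \<lfloor>x * M\<rfloor>"
  have jx: "real j \<le> x * M" "x * M < real j + 1"
    unfolding j_def using x M by auto
  have "x * M \<le> M" using x M by auto
  then have j: "j \<le> Suc m" using jx unfolding M_def by linarith
  have "x - real j / M = (x * M - real j) / M" using M by (simp add: field_simps)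
  then have "\<bar>x - real j / M\<bar> \<le> 1 / M"
    using jx M by (simp add: divide_right_mono)
  then have "of_int (qs ! j) / M + \<bar>x - real j / M\<bar> \<le> u x + 2 / M"
    using qs[OF j] u_close[OF j] by linarith
  moreover have "grid_lip m qs x \<le> of_int (qs ! j) / M + \<bar>x - real j / M\<bar>"
    unfolding grid_lip_def M_def[symmetric] using j by (intro Min_le) auto
  ultimately show ?thesis using lower by (simp add: abs_le_iff)
qed

lemma grid_lip_approx:
  fixes f :: "real \<Rightarrow> real"
  assumes f: "1-lipschitz_on {0..1} f"
  shows "\<exists>qs\<in>grid_coeffs m. \<forall>x\<in>{0..1}. \<bar>f x - f 0 - grid_lip m qs x\<bar> \<le> 2 / real (Suc m)"
proof -
  define M where "M = real (Suc m)"
  have M: "M \<ge> 1" unfolding M_def by simp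
  define u where "u x = f x - f 0" for x
  have u: "1-lipschitz_on {0..1} u"
    unfolding u_def using f by (auto simp: lipschitz_on_def dist_real_def)
  have u_bound: "\<bar>u x\<bar> \<le> 1" if "x \<in> {0..1}" for x
    using lipschitz_onD[OF u that, of 0] that by (simp add: dist_real_def u_def)
  define qs where "qs = map (\<lambda>i. \<lfloor>u (real i / M) * M\<rfloor>) [0..<Suc (Suc m)]"
  have qs_nth: "qs ! i = \<lfloor>u (real i / M) * M\<rfloor>" if "i \<le> Suc m" for i
    using that unfolding qs_def by (simp del: upt_Suc)
  have "qs \<in> grid_coeffs m"
    unfolding grid_coeffs_def
  proof safe
    show "length qs = Suc (Suc m)" unfolding qs_def by simp
  next
    fix z assume "z \<in> set qs"
    then obtain i where "i \<le> Suc m" "z = \<lfloor>u (real i / M) * M\<rfloor>"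
      unfolding qs_def by (auto simp del: upt_Suc simp: less_Suc_eq_le)
    moreover have "\<bar>u (real i / M)\<bar> \<le> 1" if "i \<le> Suc m" for i
      using that M_def by (intro u_bound) auto
    ultimately have "\<bar>u (real i / M) * M\<bar> \<le> of_int (int (Suc m))" "z = \<lfloor>u (real i / M) * M\<rfloor>"
      using M unfolding M_def by (auto simp: abs_mult mult_le_cancel_right1)
    then show "z \<in> {- int (Suc m)..int (Suc m)}"
      by (auto simp: abs_le_iff le_floor_iff floor_le_iff)
  qed
  moreover have "\<bar>u x - grid_lip m qs x\<bar> \<le> 2 / M" if "x \<in> {0..1}" for x
  proof (rule abs_diff_grid_lip_le[OF u that, of m, folded M_def])
    fix i assume "i \<le> Suc m"
    have "u (real i / M) * M - 1 \<le> of_int (qs ! i)" "of_int (qs ! i) \<le> u (real i / M) * M"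
      using qs_nth[OF \<open>i \<le> Suc m\<close>] by linarith+
    then have "(u (real i / M) * M - 1) / M \<le> of_int (qs ! i) / M"
      "of_int (qs ! i) / M \<le> u (real i / M)"
      using M by (auto intro: divide_right_mono simp: pos_divide_le_eq)
    then show "u (real i / M) - 1 / M \<le> of_int (qs ! i) / M \<and> of_int (qs ! i) / M \<le> u (real i / M)"
      using M by (simp add: diff_divide_distrib)
  qed
  ultimately show ?thesis unfolding u_def M_def by (meson atLeastAtMost_iff)
qed

lemma borel_measurable_continuous_on_unit:
  assumes "sets \<mu> = sets lam" and "continuous_on {0..1} f"
  shows "f \<in> borel_measurable \<mu>"
proof -
  have "f \<in> borel_measurable (restrict_space borel {0..1})"
    by (rule borel_measurable_continuous_on_restrict[OF assms(2)])
  moreover have "sets (restrict_space borel {0..1::real}) = sets \<mu>"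
    using assms(1) unfolding lam_def by (metis sets_lborel sets_restrict_space_cong)
  ultimately show ?thesis by (metis measurable_cong_sets)
qed

lemma
  fixes f :: "real \<Rightarrow> real"
  assumes \<mu>: "\<mu> \<in> space (prob_algebra lam)" and f: "continuous_on {0..1} f"
    and c: "\<And>x. x \<in> {0..1} \<Longrightarrow> \<bar>f x\<bar> \<le> c"
  shows integrable_bounded_on_unit: "integrable \<mu> f"
    and abs_integral_le_on_unit: "\<bar>\<integral>x. f x \<partial>\<mu>\<bar> \<le> c"
proof -
  have sets: "sets \<mu> = sets lam" and "prob_space \<mu>"
    using \<mu> by (auto simp: space_prob_algebra)
  interpret prob_space \<mu> by fact
  have space: "space \<mu> = {0..1}" using sets_eq_imp_space_eq[OF sets] by simp
  have f_meas: "f \<in> borel_measurable \<mu>"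
    by (rule borel_measurable_continuous_on_unit[OF sets f])
  have "AE x in \<mu>. norm (f x) \<le> c" using c space by (intro AE_I2) auto
  then show int: "integrable \<mu> f" by (rule integrable_const_bound[OF _ f_meas])
  have "(\<integral>x. f x \<partial>\<mu>) \<le> c"
    using c space by (intro integral_le_const[OF int] AE_I2) (auto simp: abs_le_iff)
  moreover have "(\<integral>x. - f x \<partial>\<mu>) \<le> c"
    using c space by (intro integral_le_const integrable_minus[OF int] AE_I2) (auto simp: abs_le_iff)
  ultimately show "\<bar>\<integral>x. f x \<partial>\<mu>\<bar> \<le> c" by (simp add: abs_le_iff)
qed

lemma integrable_continuous_on_unit:
  fixes f :: "real \<Rightarrow> real"
  assumes \<mu>: "\<mu> \<in> space (prob_algebra lam)" and f: "continuous_on {0..1} f"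
  shows "integrable \<mu> f"
proof -
  have "bounded (f ` {0..1})" by (intro compact_imp_bounded compact_continuous_image f) auto
  then obtain c where "\<forall>y \<in> f ` {0..1}. \<bar>y\<bar> \<le> c" unfolding bounded_real by blast
  then show ?thesis using integrable_bounded_on_unit[OF \<mu> f, of c] by simp
qed

lemma abs_integral_diff_diff_le:
  fixes f g :: "real \<Rightarrow> real"
  assumes \<mu>: "\<mu> \<in> space (prob_algebra lam)" and \<nu>: "\<nu> \<in> space (prob_algebra lam)"
    and f: "continuous_on {0..1} f" and g: "continuous_on {0..1} g"
    and close: "\<And>x. x \<in> {0..1} \<Longrightarrow> \<bar>f x - g x - c\<bar> \<le> e"
  shows "\<bar>((\<integral>x. f x \<partial>\<mu>) - (\<integral>x. f x \<partial>\<nu>)) - ((\<integral>x. g x \<partial>\<mu>) - (\<integral>x. g x \<partial>\<nu>))\<bar> \<le> 2 * e"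
proof -
  have "\<bar>(\<integral>x. f x \<partial>\<rho>) - (\<integral>x. g x \<partial>\<rho>) - c\<bar> \<le> e" if \<rho>: "\<rho> \<in> space (prob_algebra lam)" for \<rho>
  proof -
    interpret prob_space \<rho> using \<rho> by (simp add: space_prob_algebra)
    have "(\<integral>x. f x - g x - c \<partial>\<rho>) = (\<integral>x. f x \<partial>\<rho>) - (\<integral>x. g x \<partial>\<rho>) - c"
      using integrable_continuous_on_unit[OF \<rho> f] integrable_continuous_on_unit[OF \<rho> g]
      by (simp add: prob_space)
    moreover have "\<bar>\<integral>x. f x - g x - c \<partial>\<rho>\<bar> \<le> e"
      using f g close by (intro abs_integral_le_on_unit[OF \<rho>] continuous_intros)
    ultimately show ?thesis by simp
  qed
  from this[OF \<mu>] this[OF \<nu>] show ?thesis by linarith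
qed

definition KR_grid :: "nat \<Rightarrow> real measure \<Rightarrow> real measure \<Rightarrow> real" where
  "KR_grid m \<mu> \<nu> =
     Max ((\<lambda>qs. \<bar>(\<integral>x. grid_lip m qs x \<partial>\<mu>) - (\<integral>x. grid_lip m qs x \<partial>\<nu>)\<bar>) ` grid_coeffs m)"

lemma
  assumes \<mu>: "\<mu> \<in> space (prob_algebra lam)" and \<nu>: "\<nu> \<in> space (prob_algebra lam)"
  shows KR_grid_le_KR_dist: "KR_grid m \<mu> \<nu> \<le> KR_dist \<mu> \<nu>"
    and KR_dist_le_KR_grid: "KR_dist \<mu> \<nu> \<le> 4 / real (Suc m) + KR_grid m \<mu> \<nu>"
proof -
  let ?F = "{f :: real \<Rightarrow> real. 1-lipschitz_on {0..1} f}"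
  let ?D = "\<lambda>f. \<bar>(\<integral>x. f x \<partial>\<mu>) - (\<integral>x. f x \<partial>\<nu>)\<bar>"
  have "?D f \<le> 2" if f: "1-lipschitz_on {0..1} f" for f :: "real \<Rightarrow> real"
  proof -
    have "\<bar>f x - 0 - f 0\<bar> \<le> 1" if "x \<in> {0..1}" for x
      using lipschitz_onD[OF f that, of 0, unfolded dist_real_def] that by simp
    then show ?thesis
      using abs_integral_diff_diff_le[OF \<mu> \<nu>, of f "\<lambda>_. 0" "f 0" 1]
      by (simp add: lipschitz_on_continuous_on[OF f])
  qed
  then have bdd: "bdd_above (?D ` ?F)" by (intro bdd_aboveI2[where M = 2]) auto
  have "?D (grid_lip m qs) \<le> KR_dist \<mu> \<nu>" for qs
    unfolding KR_dist_def using grid_lip_lipschitz by (intro cSUP_upper[OF _ bdd]) auto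
  then show "KR_grid m \<mu> \<nu> \<le> KR_dist \<mu> \<nu>"
    unfolding KR_grid_def using finite_grid_coeffs grid_coeffs_nonempty by (subst Max_le_iff) auto
  have "?D f \<le> 4 / real (Suc m) + KR_grid m \<mu> \<nu>" if f: "f \<in> ?F" for f
  proof -
    obtain qs where qs: "qs \<in> grid_coeffs m"
      and close: "\<And>x. x \<in> {0..1} \<Longrightarrow> \<bar>f x - grid_lip m qs x - f 0\<bar> \<le> 2 / real (Suc m)"
      using grid_lip_approx[of f m] f by (auto simp: algebra_simps)
    have "\<bar>((\<integral>x. f x \<partial>\<mu>) - (\<integral>x. f x \<partial>\<nu>)) - ((\<integral>x. grid_lip m qs x \<partial>\<mu>) - (\<integral>x. grid_lip m qs x \<partial>\<nu>))\<bar>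
        \<le> 2 * (2 / real (Suc m))"
      using f by (intro abs_integral_diff_diff_le[OF \<mu> \<nu> _ _ close]
          lipschitz_on_continuous_on[OF grid_lip_lipschitz]) (auto intro: lipschitz_on_continuous_on)
    moreover have "?D (grid_lip m qs) \<le> KR_grid m \<mu> \<nu>"
      unfolding KR_grid_def using finite_grid_coeffs qs by (intro Max_ge) auto
    ultimately show ?thesis by linarith
  qed
  moreover have "(\<lambda>x. 0::real) \<in> ?F" by (auto intro!: lipschitz_onI)
  ultimately show "KR_dist \<mu> \<nu> \<le> 4 / real (Suc m) + KR_grid m \<mu> \<nu>"
    unfolding KR_dist_def by (intro cSUP_least) auto
qed

lemma KR_grid_tendsto_KR_dist:
  assumes "\<mu> \<in> space (prob_algebra lam)" and "\<nu> \<in> space (prob_algebra lam)"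
  shows "(\<lambda>m. KR_grid m \<mu> \<nu>) \<longlonglongrightarrow> KR_dist \<mu> \<nu>"
proof (rule tendsto_sandwich)
  have "(\<lambda>m. KR_dist \<mu> \<nu> - 4 * inverse (real (Suc m))) \<longlonglongrightarrow> KR_dist \<mu> \<nu> - 4 * 0"
    by (intro tendsto_intros LIMSEQ_inverse_real_of_nat)
  then show "(\<lambda>m. KR_dist \<mu> \<nu> - 4 * inverse (real (Suc m))) \<longlonglongrightarrow> KR_dist \<mu> \<nu>" by simp
  show "\<forall>\<^sub>F m in sequentially. KR_dist \<mu> \<nu> - 4 * inverse (real (Suc m)) \<le> KR_grid m \<mu> \<nu>"
    using KR_dist_le_KR_grid[OF assms] by (intro always_eventually allI) (simp add: field_simps)
  show "\<forall>\<^sub>F m in sequentially. KR_grid m \<mu> \<nu> \<le> KR_dist \<mu> \<nu>"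
    using KR_grid_le_KR_dist[OF assms] by simp
qed simp

lemma kernel_in_prob_algebra:
  assumes "\<kappa> \<in> lam \<rightarrow>\<^sub>M prob_algebra lam" and "x \<in> {0..1}"
  shows "\<kappa> x \<in> space (prob_algebra lam)"
  using measurable_space[OF assms(1), of x] assms(2) by simp

lemma borel_measurable_kernel_integral:
  fixes g :: "real \<Rightarrow> real"
  assumes "\<kappa> \<in> lam \<rightarrow>\<^sub>M prob_algebra lam" and "g \<in> borel_measurable lam"
  shows "(\<lambda>x. \<integral>y. g y \<partial>\<kappa> x) \<in> borel_measurable lam"
  using measurable_compose[OF measurable_prob_algebraD[OF assms(1)]
      integral_measurable_subprob_algebra[OF assms(2)]] .

lemma borel_measurable_grid_lip: "grid_lip m qs \<in> borel_measurable lam"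
  by (intro borel_measurable_continuous_on_unit lipschitz_on_continuous_on[OF grid_lip_lipschitz]) simp

lemma borel_measurable_KR_dist:
  assumes \<kappa>: "\<kappa> \<in> lam \<rightarrow>\<^sub>M prob_algebra lam" and \<nu>: "\<nu> \<in> space (prob_algebra lam)"
  shows "(\<lambda>x. KR_dist (\<kappa> x) \<nu>) \<in> borel_measurable lam"
proof (rule borel_measurable_LIMSEQ_real)
  fix x assume "x \<in> space lam"
  then show "(\<lambda>m. KR_grid m (\<kappa> x) \<nu>) \<longlonglongrightarrow> KR_dist (\<kappa> x) \<nu>"
    by (intro KR_grid_tendsto_KR_dist kernel_in_prob_algebra[OF \<kappa>] \<nu>) simp
next
  fix m
  show "(\<lambda>x. KR_grid m (\<kappa> x) \<nu>) \<in> borel_measurable lam"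
    unfolding KR_grid_def
    by (intro borel_measurable_Max finite_grid_coeffs borel_measurable_abs borel_measurable_diff
        borel_measurable_kernel_integral[OF \<kappa> borel_measurable_grid_lip] borel_measurable_const)
qed

lemma finite_disjoint_compacts_separated:
  fixes C :: "'j \<Rightarrow> 'a::metric_space set"
  assumes J: "finite J" and C: "\<And>j. j \<in> J \<Longrightarrow> compact (C j)" and disj: "disjoint_family_on C J"
  shows "\<exists>r>0. \<forall>i\<in>J. \<forall>j\<in>J. \<forall>x\<in>C i. \<forall>y\<in>C j. dist x y < r \<longrightarrow> i = j"
proof -
  define P where "P = {(i, j). i \<in> J \<and> j \<in> J \<and> i \<noteq> j \<and> C i \<noteq> {} \<and> C j \<noteq> {}}"
  have "P \<subseteq> J \<times> J" unfolding P_def by auto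
  then have "finite P" using J finite_subset by blast
  define r where "r = Min (insert 1 ((\<lambda>(i, j). setdist (C i) (C j)) ` P))"
  have "setdist (C i) (C j) > 0" if "(i, j) \<in> P" for i j
  proof -
    have ij: "i \<in> J" "j \<in> J" "i \<noteq> j" "C i \<noteq> {}" "C j \<noteq> {}" using that by (auto simp: P_def)
    then have "C i \<inter> C j = {}" using disj unfolding disjoint_family_on_def by blast
    then show ?thesis using ij C compact_imp_closed by (subst setdist_gt_0_compact_closed) auto
  qed
  then have "r > 0" unfolding r_def using \<open>finite P\<close> by (subst Min_gr_iff) auto
  moreover have "\<forall>i\<in>J. \<forall>j\<in>J. \<forall>x\<in>C i. \<forall>y\<in>C j. dist x y < r \<longrightarrow> i = j"
  proof (intro ballI impI)
    fix i j x y assume ij: "i \<in> J" "j \<in> J" "x \<in> C i" "y \<in> C j" and "dist x y < r"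
    show "i = j"
    proof (rule ccontr)
      assume "i \<noteq> j"
      then have "r \<le> setdist (C i) (C j)"
        unfolding r_def using \<open>finite P\<close> ij by (intro Min_le) (auto simp: P_def)
      also have "\<dots> \<le> dist x y" using ij by (intro setdist_le_dist)
      finally show False using \<open>dist x y < r\<close> by simp
    qed
  qed
  ultimately show ?thesis by blast
qed

lemma compact_inner_approx_finite_family:
  assumes J: "finite J" and E: "\<And>j. j \<in> J \<Longrightarrow> E j \<in> sets lam" and \<delta>: "\<delta> > 0"
  shows "\<exists>C. (\<forall>j\<in>J. compact (C j) \<and> C j \<subseteq> E j) \<and> measure lam (\<Union>j\<in>J. E j - C j) < \<delta>"
proof -
  define e where "e = \<delta> / (card J + 1)"
  have e: "e > 0" unfolding e_def using \<delta> by simp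
  have inner: "\<forall>j\<in>J. \<exists>C. closed C \<and> C \<subseteq> E j \<and> emeasure lebesgue (E j - C) < ennreal e"
  proof
    fix j assume "j \<in> J"
    then have "E j \<in> sets lebesgue" using E by (simp add: sets_lam_iff)
    then show "\<exists>C. closed C \<and> C \<subseteq> E j \<and> emeasure lebesgue (E j - C) < ennreal e"
      using e by (meson sets_lebesgue_inner_closed)
  qed
  obtain C where "\<forall>j\<in>J. closed (C j) \<and> C j \<subseteq> E j \<and> emeasure lebesgue (E j - C j) < ennreal e"
    using bchoice[OF inner] by blast
  then have C_closed: "\<And>j. j \<in> J \<Longrightarrow> closed (C j)" and C_sub: "\<And>j. j \<in> J \<Longrightarrow> C j \<subseteq> E j"
    and C_small: "\<And>j. j \<in> J \<Longrightarrow> emeasure lebesgue (E j - C j) < ennreal e"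
    by auto
  have C_compact: "compact (C j)" if "j \<in> J" for j
    using C_closed[OF that] C_sub[OF that] E[OF that] bounded_subset[OF bounded_closed_interval]
    unfolding compact_eq_bounded_closed sets_lam_iff by blast
  have E_minus_C: "E j - C j \<in> sets lam" if "j \<in> J" for j
    using E[OF that] C_closed[OF that] by (rule closed_Diff_sets_lam)
  have "measure lam (\<Union>j\<in>J. E j - C j) \<le> (\<Sum>j\<in>J. measure lam (E j - C j))"
    using E_minus_C J by (intro measure_UNION_le) auto
  also have "\<dots> \<le> (\<Sum>j\<in>J. e)"
    using measure_lam_less_of_lebesgue[OF E_minus_C C_small] by (intro sum_mono less_imp_le)
  also have "\<dots> < \<delta>" using \<delta> by (simp add: e_def field_simps)
  finally show ?thesis using C_compact C_sub by (intro exI[of _ C]) auto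
qed

lemma compact_subset_separating_partition:
  fixes E :: "'j \<Rightarrow> real set"
  assumes J: "finite J" and E: "\<And>j. j \<in> J \<Longrightarrow> E j \<in> sets lam"
    and disj: "disjoint_family_on E J" and cover: "{0..1} \<subseteq> (\<Union>j\<in>J. E j)" and \<delta>: "\<delta> > 0"
  obtains K r where "compact K" "K \<subseteq> {0..1}" "measure lam ({0..1} - K) < \<delta>" "r > 0"
    "\<And>x y. x \<in> K \<Longrightarrow> y \<in> K \<Longrightarrow> dist x y < r \<Longrightarrow> \<exists>j\<in>J. x \<in> E j \<and> y \<in> E j"
proof -
  obtain C where C: "\<forall>j\<in>J. compact (C j) \<and> C j \<subseteq> E j"
    and C_large: "measure lam (\<Union>j\<in>J. E j - C j) < \<delta>"
    using compact_inner_approx_finite_family[of J E, OF J E \<delta>] by blast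
  then have C_compact: "\<And>j. j \<in> J \<Longrightarrow> compact (C j)" and C_sub: "\<And>j. j \<in> J \<Longrightarrow> C j \<subseteq> E j"
    by auto
  have "disjoint_family_on C J"
    using disj C_sub unfolding disjoint_family_on_def by blast
  then obtain r where "r > 0" and sep: "\<forall>i\<in>J. \<forall>j\<in>J. \<forall>x\<in>C i. \<forall>y\<in>C j. dist x y < r \<longrightarrow> i = j"
    using finite_disjoint_compacts_separated[of J C, OF J C_compact] by blast
  define K where "K = (\<Union>j\<in>J. C j)"
  have "{0..1} - K \<subseteq> (\<Union>j\<in>J. E j - C j)"
  proof
    fix x assume x: "x \<in> {0..1} - K"
    then obtain j where "j \<in> J" "x \<in> E j" using subsetD[OF cover, of x] by auto
    with x show "x \<in> (\<Union>j\<in>J. E j - C j)" unfolding K_def by blast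
  qed
  moreover have "(\<Union>j\<in>J. E j - C j) \<in> sets lam"
    using J E C_compact by (intro sets.finite_UN closed_Diff_sets_lam compact_imp_closed) auto
  ultimately have K_large: "measure lam ({0..1} - K) < \<delta>"
    using lam.finite_measure_mono C_large by (meson order_le_less_trans)
  have K_sep: "\<exists>j\<in>J. x \<in> E j \<and> y \<in> E j" if "x \<in> K" "y \<in> K" "dist x y < r" for x y
  proof -
    obtain i j where ij: "i \<in> J" "x \<in> C i" "j \<in> J" "y \<in> C j"
      using \<open>x \<in> K\<close> \<open>y \<in> K\<close> unfolding K_def by blast
    then have "i = j" using sep \<open>dist x y < r\<close> by blast
    then show ?thesis using ij C_sub by blast
  qed
  have "compact K" unfolding K_def using J C_compact by (intro compact_UN) auto
  moreover have "K \<subseteq> {0..1}"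
    unfolding K_def using C_sub E by (intro UN_least) (auto simp: sets_lam_iff)
  ultimately show ?thesis using K_large \<open>r > 0\<close> K_sep by (rule that)
qed

lemma Lusin_uniform_finite_family:
  fixes \<phi> :: "'i \<Rightarrow> real \<Rightarrow> real"
  assumes I: "finite I" and meas: "\<And>i. i \<in> I \<Longrightarrow> \<phi> i \<in> borel_measurable lam"
    and bdd: "\<And>i. i \<in> I \<Longrightarrow> bounded (\<phi> i ` {0..1})" and \<eta>: "\<eta> > 0" and \<delta>: "\<delta> > 0"
  obtains K r where "compact K" "K \<subseteq> {0..1}" "measure lam ({0..1} - K) < \<delta>" "r > 0"
    "\<And>x y i. x \<in> K \<Longrightarrow> y \<in> K \<Longrightarrow> dist x y < r \<Longrightarrow> i \<in> I \<Longrightarrow> \<bar>\<phi> i x - \<phi> i y\<bar> < \<eta>"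
proof -
  \<comment> \<open>Partition [0,1] according to the values of the finitely many integers \<lfloor>\<phi> i x / \<eta>\<rfloor>.\<close>
  have "\<forall>i\<in>I. \<exists>B. \<forall>x\<in>{0..1}. \<bar>\<phi> i x\<bar> \<le> B" using bdd by (auto simp: bounded_real)
  then obtain B where B: "\<And>i x. i \<in> I \<Longrightarrow> x \<in> {0..1} \<Longrightarrow> \<bar>\<phi> i x\<bar> \<le> B i" by metis
  define h where "h x = (\<lambda>i\<in>I. \<lfloor>\<phi> i x / \<eta>\<rfloor>)" for x
  define J where "J = h ` {0..1}"
  have "J \<subseteq> (\<Pi>\<^sub>E i\<in>I. {\<lfloor>- B i / \<eta>\<rfloor>..\<lfloor>B i / \<eta>\<rfloor>})"
  proof
    fix j assume "j \<in> J"
    then obtain x where x: "x \<in> {0..1}" "j = h x" unfolding J_def by auto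
    have "\<lfloor>- B i / \<eta>\<rfloor> \<le> \<lfloor>\<phi> i x / \<eta>\<rfloor> \<and> \<lfloor>\<phi> i x / \<eta>\<rfloor> \<le> \<lfloor>B i / \<eta>\<rfloor>" if "i \<in> I" for i
      using B[OF that x(1)] \<eta> divide_right_mono[of "- B i" "\<phi> i x" \<eta>]
        divide_right_mono[of "\<phi> i x" "B i" \<eta>] by (intro conjI floor_mono) auto
    then show "j \<in> (\<Pi>\<^sub>E i\<in>I. {\<lfloor>- B i / \<eta>\<rfloor>..\<lfloor>B i / \<eta>\<rfloor>})"
      unfolding x h_def by auto
  qed
  then have "finite J" using I by (rule finite_subset[OF _ finite_PiE]) simp
  define E where "E j = {x \<in> space lam. h x = j}" for j
  have "E j \<in> sets lam" for j
  proof -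
    have "{x \<in> space lam. \<lfloor>\<phi> i x / \<eta>\<rfloor> = j i} \<in> sets lam" if "i \<in> I" for i
      using meas[OF that] by measurable
    then have "{x \<in> space lam. \<forall>i\<in>I. \<lfloor>\<phi> i x / \<eta>\<rfloor> = j i} \<in> sets lam"
      using I by (intro sets.sets_Collect_finite_All)
    moreover have "E j = (if j \<in> extensional I then {x \<in> space lam. \<forall>i\<in>I. \<lfloor>\<phi> i x / \<eta>\<rfloor> = j i} else {})"
      unfolding E_def h_def by (auto simp: fun_eq_iff extensional_def)
    ultimately show ?thesis by simp
  qed
  moreover have "disjoint_family_on E J" "{0..1} \<subseteq> (\<Union>j\<in>J. E j)"
    unfolding disjoint_family_on_def E_def J_def by auto
  ultimately obtain K r where K: "compact K" "K \<subseteq> {0..1}" "measure lam ({0..1} - K) < \<delta>" "r > 0"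
    and sep: "\<And>x y. x \<in> K \<Longrightarrow> y \<in> K \<Longrightarrow> dist x y < r \<Longrightarrow> \<exists>j\<in>J. x \<in> E j \<and> y \<in> E j"
    using compact_subset_separating_partition[OF \<open>finite J\<close> _ _ _ \<delta>] by metis
  have "\<bar>\<phi> i x - \<phi> i y\<bar> < \<eta>" if "x \<in> K" "y \<in> K" "dist x y < r" "i \<in> I" for x y i
  proof -
    have "h x = h y" using sep[OF that(1-3)] unfolding E_def by auto
    then have "\<lfloor>\<phi> i x / \<eta>\<rfloor> = \<lfloor>\<phi> i y / \<eta>\<rfloor>" using \<open>i \<in> I\<close> unfolding h_def by (metis restrict_apply')
    then have "\<bar>\<phi> i x / \<eta> - \<phi> i y / \<eta>\<bar> < 1" by linarith
    then show ?thesis using \<eta> by (simp add: diff_divide_distrib[symmetric] abs_divide)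
  qed
  with K that show ?thesis by blast
qed

lemma kernel_KR_dist_small_on_large_compact:
  assumes \<kappa>: "\<kappa> \<in> lam \<rightarrow>\<^sub>M prob_algebra lam" and \<epsilon>: "\<epsilon> > 0" and \<delta>: "\<delta> > 0"
  obtains K r where "compact K" "K \<subseteq> {0..1}" "measure lam ({0..1} - K) < \<delta>" "r > 0"
    "\<And>x y. x \<in> K \<Longrightarrow> y \<in> K \<Longrightarrow> dist x y < r \<Longrightarrow> KR_dist (\<kappa> x) (\<kappa> y) < \<epsilon>"
proof -
  obtain m :: nat where "8 / \<epsilon> < real m" using reals_Archimedean2 by blast
  then have m: "4 / real (Suc m) < \<epsilon> / 2" using \<epsilon> by (simp add: field_simps)
  define \<phi> where "\<phi> qs x = (\<integral>y. grid_lip m qs y \<partial>\<kappa> x)" for qs x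
  have cont: "continuous_on {0..1} (grid_lip m qs)" for qs
    by (rule lipschitz_on_continuous_on[OF grid_lip_lipschitz])
  have "bounded (\<phi> qs ` {0..1})" for qs
  proof -
    have "bounded (grid_lip m qs ` {0..1})" by (intro compact_imp_bounded compact_continuous_image cont) auto
    then obtain c where "\<forall>x\<in>{0..1}. \<bar>grid_lip m qs x\<bar> \<le> c" unfolding bounded_real by blast
    then have "\<bar>\<phi> qs x\<bar> \<le> c" if "x \<in> {0..1}" for x
      unfolding \<phi>_def by (intro abs_integral_le_on_unit kernel_in_prob_algebra[OF \<kappa> that] cont) auto
    then show ?thesis unfolding bounded_real by blast
  qed
  moreover have "\<phi> qs \<in> borel_measurable lam" for qs
    unfolding \<phi>_def by (rule borel_measurable_kernel_integral[OF \<kappa> borel_measurable_grid_lip])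
  moreover have "\<epsilon> / 2 > 0" using \<epsilon> by simp
  ultimately obtain K r where K: "compact K" "K \<subseteq> {0..1}" "measure lam ({0..1} - K) < \<delta>" "r > 0"
    and close: "\<And>x y qs. x \<in> K \<Longrightarrow> y \<in> K \<Longrightarrow> dist x y < r \<Longrightarrow> qs \<in> grid_coeffs m \<Longrightarrow>
        \<bar>\<phi> qs x - \<phi> qs y\<bar> < \<epsilon> / 2"
    using Lusin_uniform_finite_family[OF finite_grid_coeffs _ _ _ \<delta>] by metis
  have "KR_dist (\<kappa> x) (\<kappa> y) < \<epsilon>" if "x \<in> K" "y \<in> K" "dist x y < r" for x y
  proof -
    have xy: "\<kappa> x \<in> space (prob_algebra lam)" "\<kappa> y \<in> space (prob_algebra lam)"
      using that K(2) by (auto intro: kernel_in_prob_algebra[OF \<kappa>])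
    have "KR_grid m (\<kappa> x) (\<kappa> y) < \<epsilon> / 2"
      unfolding KR_grid_def using close[OF that] finite_grid_coeffs grid_coeffs_nonempty
      by (subst Max_less_iff) (auto simp: \<phi>_def)
    then show ?thesis using KR_dist_le_KR_grid[OF xy, of m] m by linarith
  qed
  with K that show ?thesis by blast
qed

lemma sets_lam_KR_dist_less:
  assumes \<kappa>: "\<kappa> \<in> lam \<rightarrow>\<^sub>M prob_algebra lam" and y: "y \<in> {0..1}" and L: "L \<in> sets lam"
  shows "{x \<in> L. KR_dist (\<kappa> x) (\<kappa> y) < \<epsilon>} \<in> sets lam"
proof -
  note [measurable] = borel_measurable_KR_dist[OF \<kappa> kernel_in_prob_algebra[OF \<kappa> y]]
  have "{x \<in> space lam. KR_dist (\<kappa> x) (\<kappa> y) < \<epsilon>} \<in> sets lam" by measurable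
  moreover have "{x \<in> L. KR_dist (\<kappa> x) (\<kappa> y) < \<epsilon>} = L \<inter> {x \<in> space lam. KR_dist (\<kappa> x) (\<kappa> y) < \<epsilon>}"
    using sets.sets_into_space[OF L] by auto
  ultimately show ?thesis using L by auto
qed

lemma k_goodI:
  assumes \<kappa>: "\<sigma>x \<in> lam \<rightarrow>\<^sub>M prob_algebra lam" and T: "invertible_mpt T"
    and A: "A k \<in> sets lam" "measure lam (A k) > 0"
    and K: "K \<in> sets lam" and B: "itimg T j (A k) - B \<in> sets lam"
    and close: "\<And>x y. x \<in> K \<inter> B \<Longrightarrow> y \<in> K \<inter> B \<Longrightarrow> KR_dist (\<sigma>x x) (\<sigma>x y) < \<epsilon>"
    and loss: "measure lam (itimg T j (A k) - K \<inter> B) \<le> \<epsilon> * measure lam (A k)"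
  shows "k_good T A \<sigma>x \<epsilon> k j"
proof -
  let ?L = "itimg T j (A k)"
  have L: "?L \<in> sets lam" "measure lam ?L = measure lam (A k)"
    using itimg_sets_lam[OF T A(1)] measure_itimg[OF T A(1)] by auto
  define G where "G = ?L - ((?L - K) \<union> (?L - B))"
  have "?L - K \<in> sets lam" using L(1) K by (rule sets.Diff)
  then have G: "G \<in> sets lam" unfolding G_def by (rule sets.Diff[OF L(1) sets.Un[OF _ B]])
  have "G \<subseteq> ?L" unfolding G_def by blast
  have "?L - G = ?L - K \<inter> B" unfolding G_def by blast
  then have G_big: "(1 - \<epsilon>) * measure lam (A k) \<le> measure lam G"
    using lam.finite_measure_Diff[OF L(1) G \<open>G \<subseteq> ?L\<close>] L(2) loss by (simp add: algebra_simps)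
  have "G \<subseteq> K \<inter> B" unfolding G_def by blast
  have "\<exists>y\<in>?L. G \<subseteq> {x \<in> ?L. KR_dist (\<sigma>x x) (\<sigma>x y) < \<epsilon>}"
  proof (cases "G = {}")
    case True
    have "?L \<noteq> {}" using L(2) A(2) by auto
    with True show ?thesis by blast
  next
    case False
    then obtain y where "y \<in> G" by blast
    then have y: "y \<in> ?L" "y \<in> K \<inter> B" using \<open>G \<subseteq> K \<inter> B\<close> \<open>G \<subseteq> ?L\<close> by blast+
    have "x \<in> ?L \<and> KR_dist (\<sigma>x x) (\<sigma>x y) < \<epsilon>" if "x \<in> G" for x
      using that close[OF _ y(2), of x] \<open>G \<subseteq> K \<inter> B\<close> \<open>G \<subseteq> ?L\<close> by blast
    then show ?thesis using y(1) by blast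
  qed
  then obtain y where y: "y \<in> ?L" and G_sub: "G \<subseteq> {x \<in> ?L. KR_dist (\<sigma>x x) (\<sigma>x y) < \<epsilon>}" by blast
  have "y \<in> {0..1}" using y L(1) by (auto simp: sets_lam_iff)
  then have "{x \<in> ?L. KR_dist (\<sigma>x x) (\<sigma>x y) < \<epsilon>} \<in> sets lam"
    by (intro sets_lam_KR_dist_less[OF \<kappa>] L(1))
  with G_sub have "measure lam G \<le> measure lam {x \<in> ?L. KR_dist (\<sigma>x x) (\<sigma>x y) < \<epsilon>}"
    by (rule lam.finite_measure_mono)
  then show ?thesis unfolding k_good_def using G_big by (intro bexI[OF _ y]) linarith
qed

lemma card_less_mult_le_sum:
  fixes f :: "'a \<Rightarrow> real"
  assumes "finite I" and "\<And>i. i \<in> I \<Longrightarrow> 0 \<le> f i"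
  shows "real (card {i \<in> I. t < f i}) * t \<le> sum f I"
proof -
  have "real (card {i \<in> I. t < f i}) * t = (\<Sum>i\<in>{i \<in> I. t < f i}. t)" by simp
  also have "\<dots> \<le> (\<Sum>i\<in>{i \<in> I. t < f i}. f i)" by (intro sum_mono) simp
  also have "\<dots> \<le> sum f I" using assms by (intro sum_mono2) auto
  finally show ?thesis .
qed

lemma (in finite_measure) sum_measure_Diff_Int_le:
  assumes I: "finite I" and disj: "disjoint_family_on L I" and L: "\<And>i. i \<in> I \<Longrightarrow> L i \<in> sets M"
    and K: "K \<in> sets M" and B: "\<And>i. i \<in> I \<Longrightarrow> L i - B i \<in> sets M"
  shows "(\<Sum>i\<in>I. measure M (L i - K \<inter> B i))
    \<le> measure M (space M - K) + (\<Sum>i\<in>I. measure M (L i - B i))"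
proof -
  have "(\<Sum>i\<in>I. measure M (L i - K \<inter> B i)) \<le> (\<Sum>i\<in>I. measure M (L i - K) + measure M (L i - B i))"
  proof (rule sum_mono)
    fix i assume i: "i \<in> I"
    have "L i - K \<inter> B i = (L i - K) \<union> (L i - B i)" by blast
    then show "measure M (L i - K \<inter> B i) \<le> measure M (L i - K) + measure M (L i - B i)"
      using L[OF i] K B[OF i] by (simp add: measure_Un_le)
  qed
  also have "(\<Sum>i\<in>I. measure M (L i - K) + measure M (L i - B i))
      = measure M (\<Union>i\<in>I. L i - K) + (\<Sum>i\<in>I. measure M (L i - B i))"
  proof -
    have "disjoint_family_on (\<lambda>i. L i - K) I"
      using disj unfolding disjoint_family_on_def by blast
    then show ?thesis using I L K by (subst finite_measure_finite_Union) (auto simp: sum.distrib)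
  qed
  also have "measure M (\<Union>i\<in>I. L i - K) \<le> measure M (space M - K)"
    using L sets.sets_into_space K by (intro finite_measure_mono) auto
  finally show ?thesis by simp
qed

lemma measure_tower:
  assumes T: "invertible_mpt T" and A: "A \<in> sets lam"
    and disj: "disjoint_family_on (\<lambda>i. itimg T i A) {..<N}"
  shows "measure lam (\<Union>i<N. itimg T i A) = real N * measure lam A"
  using itimg_sets_lam[OF T A] measure_itimg[OF T A] disj
  by (subst lam.finite_measure_finite_Union) auto

lemma card_k_good_gt:
  assumes \<kappa>: "\<sigma>x \<in> lam \<rightarrow>\<^sub>M prob_algebra lam" and T: "invertible_mpt T" and \<epsilon>: "\<epsilon> > 0"
    and A: "A k \<in> sets lam" and disj: "disjoint_family_on (\<lambda>i. itimg T i (A k)) {..<N}"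
    and K: "K \<in> sets lam"
    and close: "\<And>x y. x \<in> K \<Longrightarrow> y \<in> K \<Longrightarrow> dist x y \<le> 2 * \<rho> \<Longrightarrow> KR_dist (\<sigma>x x) (\<sigma>x y) < \<epsilon>"
    and small: "measure lam ({0..1} - K) + (\<Sum>i<N. measure lam (itimg T i (A k) - cball (c i) \<rho>))
      < \<epsilon>\<^sup>2 * measure lam (\<Union>i<N. itimg T i (A k))"
  shows "(1 - \<epsilon>) * real N < real (card {j. j < N \<and> k_good T A \<sigma>x \<epsilon> k j})"
proof -
  define a where "a = measure lam (A k)"
  define loss where "loss i = measure lam (itimg T i (A k) - K \<inter> cball (c i) \<rho>)" for i
  define Bad where "Bad = {i \<in> {..<N}. \<epsilon> * a < loss i}"
  have level_minus_ball: "itimg T i (A k) - cball (c i) \<rho> \<in> sets lam" for i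
    using itimg_sets_lam[OF T A] closed_cball by (rule closed_Diff_sets_lam)
  have "(\<Sum>i<N. loss i) \<le> measure lam ({0..1} - K) + (\<Sum>i<N. measure lam (itimg T i (A k) - cball (c i) \<rho>))"
    unfolding loss_def using K level_minus_ball itimg_sets_lam[OF T A]
    by (subst space_lam[symmetric], intro lam.sum_measure_Diff_Int_le[OF _ disj]) auto
  also have "\<dots> < \<epsilon>\<^sup>2 * (real N * a)"
    using small measure_tower[OF T A disj] by (simp add: a_def)
  finally have loss_small: "(\<Sum>i<N. loss i) < \<epsilon>\<^sup>2 * (real N * a)" .
  moreover have "0 \<le> (\<Sum>i<N. loss i)" unfolding loss_def by (simp add: sum_nonneg)
  ultimately have "0 < \<epsilon>\<^sup>2 * (real N * a)" by linarith
  then have "a > 0" using \<epsilon> by (simp add: zero_less_mult_iff)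
  have "real (card Bad) * (\<epsilon> * a) \<le> (\<Sum>i<N. loss i)"
    unfolding Bad_def loss_def by (intro card_less_mult_le_sum) auto
  with loss_small have "real (card Bad) * (\<epsilon> * a) < (\<epsilon> * real N) * (\<epsilon> * a)"
    by (simp add: power2_eq_square algebra_simps)
  then have card_Bad: "real (card Bad) < \<epsilon> * real N"
    using \<epsilon> \<open>a > 0\<close> by (simp add: mult_less_cancel_right)
  have close_ball: "KR_dist (\<sigma>x x) (\<sigma>x y) < \<epsilon>" if "x \<in> K \<inter> cball (c i) \<rho>" "y \<in> K \<inter> cball (c i) \<rho>" for i x y
    using that dist_triangle[of x y "c i"] by (intro close) (auto simp: dist_commute)
  have "{..<N} - Bad \<subseteq> {j. j < N \<and> k_good T A \<sigma>x \<epsilon> k j}"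
  proof safe
    fix j assume "j < N" "j \<notin> Bad"
    then have "loss j \<le> \<epsilon> * a" unfolding Bad_def by auto
    then show "k_good T A \<sigma>x \<epsilon> k j"
      using k_goodI[where A = A and k = k and j = j and B = "cball (c j) \<rho>", OF \<kappa> T A
          \<open>a > 0\<close>[unfolded a_def] K level_minus_ball[where i = j] close_ball[where i = j]]
      by (simp add: loss_def a_def)
  qed
  then have "card ({..<N} - Bad) \<le> card {j. j < N \<and> k_good T A \<sigma>x \<epsilon> k j}"
    by (intro card_mono) auto
  moreover have "Bad \<subseteq> {..<N}" unfolding Bad_def by blast
  then have "card ({..<N} - Bad) = N - card Bad" "card Bad \<le> N"
    using card_Diff_subset[of Bad "{..<N}"] card_mono[of "{..<N}" Bad] finite_subset by auto
  ultimately show ?thesis using card_Bad by (simp add: algebra_simps)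
qed

theorem mainTheorem5:
  fixes T :: "real \<Rightarrow> real" and n :: "nat \<Rightarrow> nat" and A :: "nat \<Rightarrow> real set"
    and \<sigma> :: "(real \<times> real) measure" and \<sigma>x :: "real \<Rightarrow> real measure" and \<epsilon> :: real
  assumes "invertible_mpt T" and "ergodic T"
    and "rigid_rank1_data T n A"
    and "self_joining T \<sigma>" and "disintegration \<sigma> \<sigma>x"
    and "\<epsilon> > 0"
  shows "\<exists>k0. \<forall>k > k0. real (card {j. j < n k \<and> k_good T A \<sigma>x \<epsilon> k j}) > (1 - \<epsilon>) * real (n k)"
proof -
  note T = assms(1) and \<epsilon> = assms(6)
  have \<kappa>: "\<sigma>x \<in> lam \<rightarrow>\<^sub>M prob_algebra lam" using assms(5) by (simp add: disintegration_def)
  have A: "\<And>k. A k \<in> sets lam" and disj: "\<And>k. disjoint_family_on (\<lambda>i. itimg T i (A k)) {..<n k}"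
    and tower: "(\<lambda>k. measure lam (\<Union>i<n k. itimg T i (A k))) \<longlonglongrightarrow> 1"
    and balls: "\<And>e. e > 0 \<Longrightarrow> \<exists>c :: nat \<Rightarrow> nat \<Rightarrow> real.
      (\<lambda>k. \<Sum>i<n k. measure lam (itimg T i (A k) - cball (c k i) (e / 2))) \<longlonglongrightarrow> 0"
    using assms(3) unfolding rigid_rank1_data_def by auto
  obtain K r where K: "compact K" "K \<subseteq> {0..1}" "measure lam ({0..1} - K) < \<epsilon>\<^sup>2" "r > 0"
    and close: "\<And>x y. x \<in> K \<Longrightarrow> y \<in> K \<Longrightarrow> dist x y < r \<Longrightarrow> KR_dist (\<sigma>x x) (\<sigma>x y) < \<epsilon>"
    using kernel_KR_dist_small_on_large_compact[OF \<kappa> \<epsilon>, of "\<epsilon>\<^sup>2"] \<epsilon> by auto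
  obtain c where c: "(\<lambda>k. \<Sum>i<n k. measure lam (itimg T i (A k) - cball (c k i) (r / 4))) \<longlonglongrightarrow> 0"
    using balls[of "r / 2"] K(4) by auto
  define loss where
    "loss k = measure lam ({0..1} - K) + (\<Sum>i<n k. measure lam (itimg T i (A k) - cball (c k i) (r / 4)))" for k
  have "(\<lambda>k. \<epsilon>\<^sup>2 * measure lam (\<Union>i<n k. itimg T i (A k)) - loss k)
      \<longlonglongrightarrow> \<epsilon>\<^sup>2 * 1 - (measure lam ({0..1} - K) + 0)"
    unfolding loss_def by (intro tendsto_intros tower c)
  then have "eventually (\<lambda>k. loss k < \<epsilon>\<^sup>2 * measure lam (\<Union>i<n k. itimg T i (A k))) sequentially"
    using K(3) by (auto dest: order_tendstoD(1)[where a = 0])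
  then obtain k0 where k0: "\<And>k. k \<ge> k0 \<Longrightarrow> loss k < \<epsilon>\<^sup>2 * measure lam (\<Union>i<n k. itimg T i (A k))"
    unfolding eventually_sequentially by blast
  have "(1 - \<epsilon>) * real (n k) < real (card {j. j < n k \<and> k_good T A \<sigma>x \<epsilon> k j})" if "k0 \<le> k" for k
  proof (rule card_k_good_gt[where A = A and k = k and N = "n k" and K = K and \<rho> = "r / 4" and c = "c k",
        OF \<kappa> T \<epsilon> A disj])
    show "K \<in> sets lam" using K(1,2) by (simp add: sets_lam_iff compact_imp_closed)
    show "KR_dist (\<sigma>x x) (\<sigma>x y) < \<epsilon>" if "x \<in> K" "y \<in> K" "dist x y \<le> 2 * (r / 4)" for x y
      using close[OF that(1,2)] that(3) K(4) by simp
  qed (use k0[OF that] in \<open>simp add: loss_def\<close>)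
  then show ?thesis by (meson less_imp_le)
qed

end
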